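(* Let $K\subset\mathbb{R}^n$ be compact and $f:K\to\mathbb{R}^m$ continuous. For any $\epsilon>0$ there exists $F:\mathbb{R}^n\to\mathbb{R}^m$ such that (1) $F$ is the feedforward function of a radial neural network with $N(f,K,\epsilon)$ hidden layers whose widths are all $\max(n,m)+1$, and (2) $|F(x)-f(x)|<\epsilon$ for all $x\in K$.
   Context: $N(f,K,\epsilon)$ is the minimal $N$ for which there exist $c_1,\dots,c_N\in K$, $r_1,\dots,r_N\in(0,1)$ with $K\subseteq\bigcup_iB_{r_i}(c_i)$ and $f(B_{r_i}(c_i)\cap K)\subseteq B_\epsilon(f(c_i))$ for all $i$, where $B_r(c)$ is the open ball. For $h:\mathbb{R}\to\mathbb{R}$ piecewise differentiable, the radial rescaling function $h^{(k)}:\mathbb{R}^k\to\mathbb{R}^k$ is $h^{(k)}(v)=h(|v|)v/|v|$ ($v\ne0$), $h^{(k)}(0)=0$. A radial neural network with widths $(n_0,\dots,n_L)$ has weights $W_i\in\mathbb{R}^{n_i\times n_{i-1}}$, biases $b_i\in\mathbb{R}^{n_i}$, radial rescaling functions $\rho_i$ on $\mathbb{R}^{n_i}$; hidden layers are $1,\dots,L-1$; feedforward function $F=F_L$, $F_0=\mathrm{id}$, $F_i(x)=\rho_i(W_iF_{i-1}(x)+b_i)$. *)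

theory Defs
  imports "HOL-Analysis.Analysis"
begin

text \<open>Vectors of R^k are represented as functions nat => real vanishing at
  all indices >= k (explicit-carrier convention, since the dimensions
  n, m, max(n,m)+1 all occur in one statement). On this subspace the product
  topology of nat => real coincides with the Euclidean topology.\<close>

definition inRn :: "nat \<Rightarrow> (nat \<Rightarrow> real) \<Rightarrow> bool" where
  "inRn k v \<longleftrightarrow> (\<forall>j\<ge>k. v j = 0)"

definition vnorm :: "nat \<Rightarrow> (nat \<Rightarrow> real) \<Rightarrow> real" where
  "vnorm k v = sqrt (\<Sum>j<k. (v j)^2)"

definition edist :: "nat \<Rightarrow> (nat \<Rightarrow> real) \<Rightarrow> (nat \<Rightarrow> real) \<Rightarrow> real" where
  "edist k u v = vnorm k (\<lambda>j. u j - v j)"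

definition eball :: "nat \<Rightarrow> (nat \<Rightarrow> real) \<Rightarrow> real \<Rightarrow> (nat \<Rightarrow> real) set" where
  "eball k c r = {v. inRn k v \<and> edist k c v < r}"

definition Ncov :: "nat \<Rightarrow> nat \<Rightarrow> ((nat \<Rightarrow> real) \<Rightarrow> (nat \<Rightarrow> real)) \<Rightarrow> (nat \<Rightarrow> real) set \<Rightarrow> real \<Rightarrow> nat" where
  "Ncov n m f K \<epsilon> = (LEAST N. \<exists>(c :: nat \<Rightarrow> nat \<Rightarrow> real) (r :: nat \<Rightarrow> real).
      (\<forall>i<N. c i \<in> K \<and> 0 < r i \<and> r i < 1) \<and>
      K \<subseteq> (\<Union>i<N. eball n (c i) (r i)) \<and>
      (\<forall>i<N. f ` (eball n (c i) (r i) \<inter> K) \<subseteq> eball m (f (c i)) \<epsilon>))"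

definition piecewise_diff :: "(real \<Rightarrow> real) \<Rightarrow> bool" where
  "piecewise_diff h \<longleftrightarrow> (\<exists>S. finite S \<and> (\<forall>x. x \<notin> S \<longrightarrow> h differentiable (at x)))"

definition radial :: "nat \<Rightarrow> (real \<Rightarrow> real) \<Rightarrow> (nat \<Rightarrow> real) \<Rightarrow> (nat \<Rightarrow> real)" where
  "radial k h v = (if vnorm k v = 0 then (\<lambda>_. 0)
      else (\<lambda>j. if j < k then h (vnorm k v) * v j / vnorm k v else 0))"

definition affine_layer :: "nat \<Rightarrow> nat \<Rightarrow> (nat \<Rightarrow> nat \<Rightarrow> real) \<Rightarrow> (nat \<Rightarrow> real) \<Rightarrow> (nat \<Rightarrow> real) \<Rightarrow> (nat \<Rightarrow> real)" where
  "affine_layer k0 k1 W b x = (\<lambda>i. if i < k1 then (\<Sum>j<k0. W i j * x j) + b i else 0)"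

text \<open>Feedforward function: widths list (n_0,...,n_L), layers list of
  (W_i, b_i, h_i) for i = 1..L; F_i = rho_i(W_i F_{i-1} + b_i).\<close>
fun feedforward :: "nat list \<Rightarrow> ((nat \<Rightarrow> nat \<Rightarrow> real) \<times> (nat \<Rightarrow> real) \<times> (real \<Rightarrow> real)) list
      \<Rightarrow> (nat \<Rightarrow> real) \<Rightarrow> (nat \<Rightarrow> real)" where
  "feedforward (k0 # k1 # ks) ((W, b, h) # ls) x =
     feedforward (k1 # ks) ls (radial k1 h (affine_layer k0 k1 W b x))"
| "feedforward _ _ x = x"

definition is_radial_nn_fun :: "nat list \<Rightarrow> ((nat \<Rightarrow> real) \<Rightarrow> (nat \<Rightarrow> real)) \<Rightarrow> bool" where
  "is_radial_nn_fun ns F \<longleftrightarrow> (\<exists>ls. length ns = length ls + 1 \<and>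
      (\<forall>(W, b, h) \<in> set ls. piecewise_diff h) \<and> F = feedforward ns ls)"

end

theory Submission
  imports Defs
begin

text \<open>Cover K by N = N(f,K,\<epsilon>) balls B_i = B(c_i, r_i) on each of which f stays
  \<epsilon>-close to f(c_i); it suffices to build a network that returns f(c_k) for the first
  ball B_k containing x. An extra coordinate serves as a flag that is 1 while searching: the
  affine part of hidden layer i produces (x - c_i, 1), whose norm is below sqrt(1 + r_i^2)
  exactly when x \<in> B_i, so the radial cut-off at that radius sets the state to 0 precisely
  at the first hit. From then on the flag is 0 and the layers maintain the state
  M (f(c_k) - f(c_i)); for M large this vector is either 0 or longer than every cut-off
  radius, so it passes unchanged, and the output layer rescales it by 1/M and adds
  f(c_(N-1)).\<close>

lemma vnorm_nonneg: "0 \<le> vnorm k v"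
  by (simp add: vnorm_def sum_nonneg)

lemma abs_coord_le_vnorm:
  assumes "j < k"
  shows "\<bar>v j\<bar> \<le> vnorm k v"
proof -
  have "(v j)^2 \<le> (\<Sum>i<k. (v i)^2)"
    using assms by (intro member_le_sum) auto
  then show ?thesis
    unfolding vnorm_def using real_le_rsqrt[of "\<bar>v j\<bar>"] by simp
qed

lemma vnorm_eq_0_imp_zero:
  assumes "inRn k v" and "vnorm k v = 0"
  shows "v = (\<lambda>_. 0)"
proof
  fix j
  show "v j = 0"
  proof (cases "j < k")
    case True
    then show ?thesis
      using abs_coord_le_vnorm[OF True, of v] assms(2) by simp
  next
    case False
    then show ?thesis using assms(1) by (simp add: inRn_def)
  qed
qed

lemma vnorm_cong_dim:
  assumes "inRn k v" and "k \<le> k'"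
  shows "vnorm k' v = vnorm k v"
proof -
  have "(\<Sum>j<k'. (v j)^2) = (\<Sum>j<k. (v j)^2)"
    using assms by (intro sum.mono_neutral_right) (auto simp: inRn_def)
  then show ?thesis by (simp add: vnorm_def)
qed

lemma vnorm_scale: "vnorm k (\<lambda>a. s * v a) = \<bar>s\<bar> * vnorm k v"
  by (simp add: vnorm_def power_mult_distrib sum_distrib_left[symmetric] real_sqrt_mult)

lemma vnorm_fun_upd_dim: "vnorm (Suc d) (u(d := t)) = sqrt ((vnorm d u)^2 + t^2)"
  by (simp add: vnorm_def sum_nonneg)

lemma edist_self: "edist k x x = 0"
  by (simp add: edist_def vnorm_def)

lemma edist_commute: "edist k u v = edist k v u"
  by (simp add: edist_def vnorm_def power2_commute)

lemma continuous_on_edist: "continuous_on UNIV (\<lambda>y. edist k x y)"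
  unfolding edist_def vnorm_def
  by (intro continuous_intros continuous_on_product_coordinates)

section \<open>Continuity and covers by balls\<close>

lemma tendsto_fun_iff:
  fixes g :: "'a \<Rightarrow> 'b \<Rightarrow> 'c::topological_space"
  shows "(g \<longlongrightarrow> l) F \<longleftrightarrow> (\<forall>i. ((\<lambda>t. g t i) \<longlongrightarrow> l i) F)"
proof -
  have "(g \<longlongrightarrow> l) F \<longleftrightarrow> limitin (product_topology (\<lambda>_. euclidean) UNIV) g l F"
    by (metis limitin_canonical_iff euclidean_product_topology)
  also have "\<dots> \<longleftrightarrow> (\<forall>i. limitin euclidean (\<lambda>t. g t i) (l i) F)"
    by (simp add: limitin_componentwise)
  finally show ?thesis by simp
qed

lemma tendsto_of_edist:
  assumes "inRn n x" and "\<And>k. inRn n (y k)"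
    and "(\<lambda>k. edist n x (y k)) \<longlonglongrightarrow> 0"
  shows "y \<longlonglongrightarrow> x"
  unfolding tendsto_fun_iff
proof
  fix i
  show "(\<lambda>k. y k i) \<longlonglongrightarrow> x i"
  proof (cases "i < n")
    case True
    have "\<bar>y k i - x i\<bar> \<le> edist n x (y k)" for k
      using abs_coord_le_vnorm[OF True, of "\<lambda>j. x j - y k j"] by (simp add: edist_def)
    then have "((\<lambda>k. y k i - x i) \<longlonglongrightarrow> 0)"
      by (intro tendsto_0_le[OF assms(3), of _ 1]) (simp add: edist_def vnorm_nonneg)
    then show ?thesis by (simp add: LIM_zero_iff)
  next
    case False
    then show ?thesis using assms(1,2) by (simp add: inRn_def)
  qed
qed

lemma continuous_on_edist_delta:
  assumes "K \<subseteq> {x. inRn n x}" and "continuous_on K f" and "x \<in> K" and "0 < \<epsilon>"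
  shows "\<exists>\<delta>>0. \<forall>y\<in>K. edist n x y < \<delta> \<longrightarrow> edist m (f x) (f y) < \<epsilon>"
proof (rule ccontr)
  assume "\<not> ?thesis"
  then have "\<forall>k. \<exists>y\<in>K. edist n x y < inverse (Suc k) \<and> \<not> edist m (f x) (f y) < \<epsilon>"
    by (metis of_nat_0_less_iff positive_imp_inverse_positive zero_less_Suc)
  then obtain y where y: "\<And>k. y k \<in> K" "\<And>k. edist n x (y k) < inverse (Suc k)"
    and far: "\<And>k. \<not> edist m (f x) (f (y k)) < \<epsilon>"
    by metis
  have "(\<lambda>k. edist n x (y k)) \<longlonglongrightarrow> 0"
    using y(2) by (intro tendsto_0_le[OF LIMSEQ_inverse_real_of_nat, of _ 1])
      (auto simp: edist_def vnorm_nonneg less_imp_le)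
  then have "y \<longlonglongrightarrow> x"
    using assms(1,3) y(1) by (intro tendsto_of_edist) auto
  then have "(\<lambda>k. f (y k)) \<longlonglongrightarrow> f x"
    using y(1) by (intro continuous_on_tendsto_compose[OF assms(2) _ assms(3)]) auto
  then have "(\<lambda>k. edist m (f x) (f (y k))) \<longlonglongrightarrow> edist m (f x) (f x)"
    by (intro continuous_on_tendsto_compose[OF continuous_on_edist]) auto
  then have "eventually (\<lambda>k. edist m (f x) (f (y k)) < \<epsilon>) sequentially"
    using assms(4) by (intro order_tendstoD(2)) (auto simp: edist_self)
  then show False using far by (auto simp: eventually_sequentially)
qed

definition ball_cover :: "nat \<Rightarrow> nat \<Rightarrow> ((nat \<Rightarrow> real) \<Rightarrow> (nat \<Rightarrow> real)) \<Rightarrow> (nat \<Rightarrow> real) set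
    \<Rightarrow> real \<Rightarrow> nat \<Rightarrow> (nat \<Rightarrow> nat \<Rightarrow> real) \<Rightarrow> (nat \<Rightarrow> real) \<Rightarrow> bool" where
  "ball_cover n m f K \<epsilon> N c r \<longleftrightarrow>
     (\<forall>i<N. c i \<in> K \<and> 0 < r i \<and> r i < 1) \<and>
     K \<subseteq> (\<Union>i<N. eball n (c i) (r i)) \<and>
     (\<forall>i<N. f ` (eball n (c i) (r i) \<inter> K) \<subseteq> eball m (f (c i)) \<epsilon>)"

lemma ex_ball_cover:
  assumes "K \<subseteq> {x. inRn n x}" and "compact K" and "continuous_on K f"
    and "\<forall>x\<in>K. inRn m (f x)" and "0 < \<epsilon>"
  shows "\<exists>N c r. ball_cover n m f K \<epsilon> N c r"
proof -
  have "\<forall>x\<in>K. \<exists>\<delta>>0. \<forall>y\<in>K. edist n x y < \<delta> \<longrightarrow> edist m (f x) (f y) < \<epsilon>"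
    using continuous_on_edist_delta[OF assms(1,3) _ assms(5)] by blast
  then obtain \<delta> where
    "\<forall>x\<in>K. 0 < \<delta> x \<and> (\<forall>y\<in>K. edist n x y < \<delta> x \<longrightarrow> edist m (f x) (f y) < \<epsilon>)"
    by (metis bchoice)
  then have \<delta>_pos: "\<And>x. x \<in> K \<Longrightarrow> 0 < \<delta> x"
    and \<delta>_close: "\<And>x y. x \<in> K \<Longrightarrow> y \<in> K \<Longrightarrow> edist n x y < \<delta> x \<Longrightarrow> edist m (f x) (f y) < \<epsilon>"
    by blast+
  define \<rho> where "\<rho> x = min (\<delta> x) (1/2)" for x
  have "open {y. edist n x y < \<rho> x}" for x
    by (intro open_Collect_less continuous_on_edist continuous_on_const)
  moreover have "K \<subseteq> (\<Union>x\<in>K. {y. edist n x y < \<rho> x})"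
    using \<delta>_pos by (auto simp: \<rho>_def edist_self)
  ultimately obtain C where "C \<subseteq> K" "finite C"
    and C_cover: "K \<subseteq> (\<Union>x\<in>C. {y. edist n x y < \<rho> x})"
    by (rule compactE_image[OF assms(2)])
  obtain N :: nat and c where C_eq: "C = c ` {..<N}"
    using finite_imp_nat_seg_image_inj_on[OF \<open>finite C\<close>] unfolding lessThan_def by blast
  then have cK: "\<And>i. i < N \<Longrightarrow> c i \<in> K"
    using \<open>C \<subseteq> K\<close> by blast
  have "ball_cover n m f K \<epsilon> N c (\<lambda>i. \<rho> (c i))"
    unfolding ball_cover_def
  proof (intro conjI allI impI subsetI)
    fix i assume "i < N"
    then show "c i \<in> K" and "0 < \<rho> (c i)" and "\<rho> (c i) < 1"
      using cK \<delta>_pos by (auto simp: \<rho>_def)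
  next
    fix i z assume "i < N" and "z \<in> f ` (eball n (c i) (\<rho> (c i)) \<inter> K)"
    then show "z \<in> eball m (f (c i)) \<epsilon>"
      using cK \<delta>_close assms(4) by (auto simp: eball_def \<rho>_def)
  next
    fix x assume "x \<in> K"
    then show "x \<in> (\<Union>i<N. eball n (c i) (\<rho> (c i)))"
      using C_cover C_eq assms(1) by (auto simp: eball_def)
  qed
  then show ?thesis by blast
qed

lemma ball_cover_Ncov:
  assumes "K \<subseteq> {x. inRn n x}" and "compact K" and "continuous_on K f"
    and "\<forall>x\<in>K. inRn m (f x)" and "0 < \<epsilon>"
  shows "\<exists>c r. ball_cover n m f K \<epsilon> (Ncov n m f K \<epsilon>) c r"
  unfolding Ncov_def ball_cover_def[symmetric]
  by (rule LeastI_ex) (rule ex_ball_cover[OF assms])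

type_synonym layer_params = "(nat \<Rightarrow> nat \<Rightarrow> real) \<times> (nat \<Rightarrow> real) \<times> (real \<Rightarrow> real)"

fun layer :: "nat \<Rightarrow> nat \<Rightarrow> layer_params \<Rightarrow> (nat \<Rightarrow> real) \<Rightarrow> (nat \<Rightarrow> real)" where
  "layer k0 k1 (W, b, h) x = radial k1 h (affine_layer k0 k1 W b x)"

lemma feedforward_Cons_Cons:
  "feedforward (k0 # k1 # ks) (l # ls) x = feedforward (k1 # ks) ls (layer k0 k1 l x)"
  by (cases l) simp

lemma feedforward_append:
  assumes "length ls = length ks"
  shows "feedforward (ks @ k # ks') (ls @ ls') x = feedforward (k # ks') ls' (feedforward (ks @ [k]) ls x)"
  using assms
proof (induction ks arbitrary: ls x)
  case Nil
  then show ?case by simp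
next
  case (Cons k0 ks)
  obtain l ls0 where ls: "ls = l # ls0" and len: "length ls0 = length ks"
    using Cons.prems by (cases ls) auto
  obtain k1 rest where k1: "ks @ [k] = k1 # rest"
    by (cases "ks @ [k]") auto
  have "ks @ k # ks' = k1 # rest @ ks'"
    by (metis k1 append_Cons append_assoc append_Nil)
  then have "feedforward ((k0 # ks) @ k # ks') (ls @ ls') x
      = feedforward (ks @ k # ks') (ls0 @ ls') (layer k0 k1 l x)"
    by (simp only: ls append_Cons feedforward_Cons_Cons)
  also have "\<dots> = feedforward (k # ks') ls' (feedforward ((k0 # ks) @ [k]) ls x)"
    by (simp only: Cons.IH[OF len] ls k1 append_Cons feedforward_Cons_Cons)
  finally show ?case .
qed

lemma feedforward_snoc:
  assumes "length ls = length ks"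
  shows "feedforward (ks @ [k, k']) (ls @ [l]) x = layer k k' l (feedforward (ks @ [k]) ls x)"
  using feedforward_append[OF assms, of k "[k']" "[l]"] by (simp add: feedforward_Cons_Cons)

definition scaled_id_plus_col :: "nat \<Rightarrow> real \<Rightarrow> (nat \<Rightarrow> real) \<Rightarrow> nat \<Rightarrow> nat \<Rightarrow> real" where
  "scaled_id_plus_col d s p = (\<lambda>a j. s * (if a = j then 1 else 0) + (if j = d then p a else 0))"

lemma affine_layer_scaled_id_plus_col:
  assumes "inRn k0 z"
  shows "affine_layer k0 k1 (scaled_id_plus_col d s p) b z = (\<lambda>a. if a < k1 then s * z a + z d * p a + b a else 0)"
proof
  fix a
  have "(\<Sum>j<k0. scaled_id_plus_col d s p a j * z j)
      = (\<Sum>j<k0. (if j = a then s * z a else 0) + (if j = d then z d * p a else 0))"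
    by (intro sum.cong) (auto simp: scaled_id_plus_col_def algebra_simps)
  also have "\<dots> = s * z a + z d * p a"
    using assms by (simp add: sum.distrib inRn_def)
  finally show "affine_layer k0 k1 (scaled_id_plus_col d s p) b z a = (if a < k1 then s * z a + z d * p a + b a else 0)"
    by (simp add: affine_layer_def)
qed

definition hcut :: "real \<Rightarrow> real \<Rightarrow> real" where
  "hcut \<theta> t = (if t < \<theta> then 0 else t)"

lemma radial_id:
  assumes "inRn k v"
  shows "radial k (\<lambda>t. t) v = v"
  using assms vnorm_eq_0_imp_zero[OF assms] by (auto simp: radial_def inRn_def)

lemma radial_hcut:
  assumes "inRn k v" and "0 < \<theta>"
  shows "radial k (hcut \<theta>) v = (if vnorm k v < \<theta> then (\<lambda>_. 0) else v)"
  using assms vnorm_eq_0_imp_zero[OF assms(1)] by (auto simp: radial_def inRn_def hcut_def)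

lemma piecewise_diff_id: "piecewise_diff (\<lambda>t. t)"
  unfolding piecewise_diff_def by (rule exI[of _ "{}"]) simp

lemma piecewise_diff_hcut: "piecewise_diff (hcut \<theta>)"
  unfolding piecewise_diff_def
proof (intro exI[of _ "{\<theta>}"] conjI allI impI)
  fix x :: real
  assume "x \<notin> {\<theta>}"
  then consider "x < \<theta>" | "\<theta> < x" by fastforce
  then show "hcut \<theta> differentiable at x"
  proof cases
    case 1
    have "(hcut \<theta> has_derivative (\<lambda>_. 0)) (at x)"
      by (rule has_derivative_transform_within_open[where f = "\<lambda>_. 0" and s = "{..<\<theta>}"])
        (use 1 in \<open>auto simp: hcut_def\<close>)
    then show ?thesis by (auto simp: differentiable_def)
  next
    case 2
    have "(hcut \<theta> has_derivative (\<lambda>t. t)) (at x)"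
      by (rule has_derivative_transform_within_open[where f = "\<lambda>t. t" and s = "{\<theta><..}"])
        (use 2 in \<open>auto simp: hcut_def\<close>)
    then show ?thesis by (auto simp: differentiable_def)
  qed
qed simp

section \<open>The first-hit network\<close>

lemma ex_scale_ge:
  fixes S :: "real set"
  assumes "finite S"
  shows "\<exists>M>0. \<forall>s\<in>S. 0 < s \<longrightarrow> B \<le> M * s"
  using assms
proof (induction S rule: finite_induct)
  case empty
  show ?case by (intro exI[of _ 1]) simp
next
  case (insert x S)
  then obtain M where "0 < M" and M: "\<forall>s\<in>S. 0 < s \<longrightarrow> B \<le> M * s"
    by blast
  define M' where "M' = max M (B / x)"
  have "B \<le> M' * s" if "s \<in> insert x S" and "0 < s" for s
  proof (cases "s = x")
    case True
    have "B = B / x * x" using that True by simp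
    also have "\<dots> \<le> M' * x" using that True by (intro mult_right_mono) (auto simp: M'_def)
    finally show ?thesis using True by simp
  next
    case False
    then have "B \<le> M * s" using M that by auto
    also have "\<dots> \<le> M' * s" using that by (simp add: M'_def mult_right_mono)
    finally show ?thesis .
  qed
  moreover have "0 < M'" using \<open>0 < M\<close> by (simp add: M'_def)
  ultimately show ?case by blast
qed

locale first_hit_net =
  fixes n m N :: nat and c y :: "nat \<Rightarrow> nat \<Rightarrow> real" and r :: "nat \<Rightarrow> real" and M :: real
  assumes centre_dim: "\<And>i. i < N \<Longrightarrow> inRn n (c i)"
    and radius_pos: "\<And>i. i < N \<Longrightarrow> 0 < r i"
    and value_dim: "\<And>i. i < N \<Longrightarrow> inRn m (y i)"
    and scale_pos: "0 < M"
    and scale_large: "\<And>i j k. i < N \<Longrightarrow> j < N \<Longrightarrow> k < N \<Longrightarrow> 0 < edist m (y k) (y j) \<Longrightarrow>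
      sqrt (1 + (r i)^2) \<le> M * edist m (y k) (y j)"
begin

abbreviation d :: nat where "d \<equiv> max n m"

definition threshold :: "nat \<Rightarrow> real" where
  "threshold i = sqrt (1 + (r i)^2)"

definition searching :: "nat \<Rightarrow> (nat \<Rightarrow> real) \<Rightarrow> (nat \<Rightarrow> real)" where
  "searching j x = (\<lambda>a. x a - c j a)(d := 1)"

definition settled :: "nat \<Rightarrow> nat \<Rightarrow> (nat \<Rightarrow> real)" where
  "settled k j = (\<lambda>a. M * (y k a - y j a))"

text \<open>On a state with flag t, the affine part of hidden layer j + 1 adds
  t (c_j - c_(j+1)) + (1 - t) M (y_j - y_(j+1)) to the first d coordinates.\<close>
fun hidden_layer :: "nat \<Rightarrow> layer_params" where
  "hidden_layer 0 = (scaled_id_plus_col d 1 (\<lambda>_. 0), (\<lambda>a. - c 0 a)(d := 1), hcut (threshold 0))"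
| "hidden_layer (Suc j) =
     (scaled_id_plus_col d 1 (\<lambda>a. c j a - c (Suc j) a - M * (y j a - y (Suc j) a)),
      (\<lambda>a. M * (y j a - y (Suc j) a)), hcut (threshold (Suc j)))"

definition output_layer :: layer_params where
  "output_layer = (scaled_id_plus_col d (1 / M) (\<lambda>_. 0), y (N - 1), (\<lambda>t. t))"

definition net :: "(nat \<Rightarrow> real) \<Rightarrow> (nat \<Rightarrow> real)" where
  "net = feedforward (n # replicate N (Suc d) @ [m]) (map hidden_layer [0..<N] @ [output_layer])"

lemma threshold_pos: "0 < threshold i"
  by (simp add: threshold_def add_pos_nonneg)

lemma centre_vanishes: "i < N \<Longrightarrow> n \<le> a \<Longrightarrow> c i a = 0"
  using centre_dim by (simp add: inRn_def)

lemma value_vanishes: "i < N \<Longrightarrow> m \<le> a \<Longrightarrow> y i a = 0"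
  using value_dim by (simp add: inRn_def)

lemma searching_dim: "inRn n x \<Longrightarrow> j < N \<Longrightarrow> inRn (Suc d) (searching j x)"
  by (simp add: inRn_def searching_def centre_vanishes)

lemma settled_dim: "j < N \<Longrightarrow> k < N \<Longrightarrow> inRn (Suc d) (settled k j)"
  by (simp add: inRn_def settled_def value_vanishes)

lemma settled_self: "settled k k = (\<lambda>_. 0)"
  by (simp add: settled_def)

lemma vnorm_searching_less_iff:
  assumes "inRn n x" and "j < N"
  shows "vnorm (Suc d) (searching j x) < threshold j \<longleftrightarrow> x \<in> eball n (c j) (r j)"
proof -
  have "inRn n (\<lambda>a. x a - c j a)"
    using assms by (simp add: inRn_def centre_vanishes)
  then have "vnorm d (\<lambda>a. x a - c j a) = edist n x (c j)"
    by (simp add: vnorm_cong_dim[of n _ d] edist_def)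
  then have "vnorm (Suc d) (searching j x) = sqrt ((edist n (c j) x)^2 + 1)"
    by (simp add: searching_def vnorm_fun_upd_dim edist_commute)
  moreover have "0 \<le> edist n (c j) x" and "0 < r j"
    using radius_pos assms(2) by (simp_all add: edist_def vnorm_nonneg)
  ultimately show ?thesis
    using assms(1) by (simp add: threshold_def eball_def add.commute flip: not_le)
qed

lemma radial_hcut_settled:
  assumes "i < N" and "j < N" and "k < N"
  shows "radial (Suc d) (hcut (threshold i)) (settled k j) = settled k j"
proof (cases "edist m (y k) (y j) = 0")
  case True
  have "inRn m (\<lambda>a. y k a - y j a)"
    using assms by (simp add: inRn_def value_vanishes)
  then have "(\<lambda>a. y k a - y j a) = (\<lambda>_. 0)"
    using True vnorm_eq_0_imp_zero by (simp add: edist_def)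
  then have "settled k j = (\<lambda>_. 0)"
    by (simp add: settled_def fun_eq_iff)
  then show ?thesis
    using threshold_pos by (simp add: radial_def vnorm_def)
next
  case False
  have "inRn m (\<lambda>a. y k a - y j a)"
    using assms by (simp add: inRn_def value_vanishes)
  then have "vnorm (Suc d) (settled k j) = M * edist m (y k) (y j)"
    using scale_pos by (simp add: settled_def vnorm_scale edist_def vnorm_cong_dim[of m _ "Suc d"])
  moreover have "threshold i \<le> M * edist m (y k) (y j)"
    using False scale_large assms by (simp add: threshold_def edist_def vnorm_nonneg order_le_neq_trans)
  ultimately show ?thesis
    using radial_hcut[OF settled_dim threshold_pos] assms by simp
qed

lemma layer_first:
  assumes "inRn n x" and "0 < N"
  shows "layer n (Suc d) (hidden_layer 0) x
    = (if x \<in> eball n (c 0) (r 0) then settled 0 0 else searching 0 x)"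
proof -
  have "affine_layer n (Suc d) (scaled_id_plus_col d 1 (\<lambda>_. 0)) ((\<lambda>a. - c 0 a)(d := 1)) x = searching 0 x"
    using assms by (auto simp: affine_layer_scaled_id_plus_col searching_def inRn_def centre_vanishes)
  then show ?thesis
    using radial_hcut[OF searching_dim[OF assms(1)] threshold_pos] vnorm_searching_less_iff[OF assms(1)] assms(2)
    by (simp add: settled_self)
qed

lemma layer_searching:
  assumes "inRn n x" and "Suc j < N"
  shows "layer (Suc d) (Suc d) (hidden_layer (Suc j)) (searching j x)
    = (if x \<in> eball n (c (Suc j)) (r (Suc j)) then settled (Suc j) (Suc j) else searching (Suc j) x)"
proof -
  let ?p = "\<lambda>a. c j a - c (Suc j) a - M * (y j a - y (Suc j) a)"
  have "affine_layer (Suc d) (Suc d) (scaled_id_plus_col d 1 ?p) (\<lambda>a. M * (y j a - y (Suc j) a)) (searching j x)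
      = (\<lambda>a. if a < Suc d then 1 * searching j x a + searching j x d * ?p a + M * (y j a - y (Suc j) a) else 0)"
    using assms by (intro affine_layer_scaled_id_plus_col searching_dim) auto
  also have "\<dots> = searching (Suc j) x"
    using assms
    by (auto simp: fun_eq_iff searching_def inRn_def centre_vanishes value_vanishes)
  finally show ?thesis
    using radial_hcut[OF searching_dim[OF assms(1)] threshold_pos] vnorm_searching_less_iff[OF assms(1)] assms
    by (simp add: settled_self)
qed

lemma layer_settled:
  assumes "Suc j < N" and "k < N"
  shows "layer (Suc d) (Suc d) (hidden_layer (Suc j)) (settled k j) = settled k (Suc j)"
proof -
  let ?p = "\<lambda>a. c j a - c (Suc j) a - M * (y j a - y (Suc j) a)"
  have "affine_layer (Suc d) (Suc d) (scaled_id_plus_col d 1 ?p) (\<lambda>a. M * (y j a - y (Suc j) a)) (settled k j)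
      = (\<lambda>a. if a < Suc d then 1 * settled k j a + settled k j d * ?p a + M * (y j a - y (Suc j) a) else 0)"
    using assms by (intro affine_layer_scaled_id_plus_col settled_dim) auto
  also have "\<dots> = settled k (Suc j)"
    using assms by (auto simp: fun_eq_iff settled_def value_vanishes algebra_simps)
  finally show ?thesis
    using radial_hcut_settled assms by simp
qed

lemma layer_output:
  assumes "k < N"
  shows "layer (Suc d) m output_layer (settled k (N - 1)) = y k"
proof -
  have "affine_layer (Suc d) m (scaled_id_plus_col d (1 / M) (\<lambda>_. 0)) (y (N - 1)) (settled k (N - 1))
      = (\<lambda>a. if a < m then 1 / M * settled k (N - 1) a + settled k (N - 1) d * 0 + y (N - 1) a else 0)"
    using assms by (intro affine_layer_scaled_id_plus_col settled_dim) auto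
  also have "\<dots> = y k"
    using assms scale_pos by (auto simp: fun_eq_iff settled_def value_vanishes)
  finally show ?thesis
    using radial_id value_dim assms by (simp add: output_layer_def)
qed

definition hidden_state :: "nat \<Rightarrow> (nat \<Rightarrow> real) \<Rightarrow> (nat \<Rightarrow> real)" where
  "hidden_state i = feedforward (n # replicate i (Suc d)) (map hidden_layer [0..<i])"

lemma hidden_state_Suc:
  "hidden_state (Suc i) x = layer (if i = 0 then n else Suc d) (Suc d) (hidden_layer i) (hidden_state i x)"
proof (cases i)
  case 0
  then show ?thesis by (simp add: hidden_state_def feedforward_Cons_Cons)
next
  case (Suc j)
  have replicate_Suc_i: "n # replicate (Suc i) (Suc d) = (n # replicate j (Suc d)) @ [Suc d, Suc d]"
    and replicate_i: "n # replicate i (Suc d) = (n # replicate j (Suc d)) @ [Suc d]"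
    using Suc by (simp_all add: replicate_append_same[symmetric])
  have map_Suc_i: "map hidden_layer [0..<Suc i] = map hidden_layer [0..<i] @ [hidden_layer i]"
    by simp
  have "hidden_state (Suc i) x = layer (Suc d) (Suc d) (hidden_layer i) (hidden_state i x)"
    unfolding hidden_state_def replicate_Suc_i replicate_i map_Suc_i
    by (intro feedforward_snoc) (simp add: Suc)
  then show ?thesis
    using Suc by simp
qed

lemma hidden_state_first_hit:
  assumes "inRn n x" and "k < N" and "x \<in> eball n (c k) (r k)"
    and "\<forall>j<k. x \<notin> eball n (c j) (r j)" and "i < N"
  shows "hidden_state (Suc i) x = (if i < k then searching i x else settled k i)"
  using assms(5)
proof (induction i)
  case 0
  have "hidden_state 0 x = x"
    by (simp add: hidden_state_def)
  then show ?case
    using layer_first[OF assms(1)] assms(2-4) by (auto simp: hidden_state_Suc)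
next
  case (Suc i)
  then have IH: "hidden_state (Suc i) x = (if i < k then searching i x else settled k i)"
    by simp
  show ?case
  proof (cases "i < k")
    case True
    then consider "Suc i < k" | "Suc i = k" by linarith
    then show ?thesis
      using IH True layer_searching[OF assms(1) Suc.prems] assms(3,4) by cases (simp_all add: hidden_state_Suc)
  next
    case False
    then show ?thesis
      using IH layer_settled[OF Suc.prems assms(2)] by (simp add: hidden_state_Suc)
  qed
qed

lemma net_first_hit:
  assumes "inRn n x" and "k < N" and "x \<in> eball n (c k) (r k)"
    and "\<forall>j<k. x \<notin> eball n (c j) (r j)"
  shows "net x = y k"
proof -
  obtain N' where N: "N = Suc N'"
    using assms(2) less_imp_Suc_add by blast
  have widths: "n # replicate N (Suc d) @ [m] = (n # replicate N' (Suc d)) @ [Suc d, m]"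
    and replicate_N: "n # replicate N (Suc d) = (n # replicate N' (Suc d)) @ [Suc d]"
    using N by (simp_all add: replicate_append_same[symmetric])
  have "net x = layer (Suc d) m output_layer (hidden_state N x)"
    unfolding net_def hidden_state_def widths replicate_N
    by (intro feedforward_snoc) (simp add: N)
  also have "hidden_state N x = settled k (N - 1)"
    using hidden_state_first_hit[OF assms, of N'] assms(2) N by simp
  finally show ?thesis
    using layer_output[OF assms(2)] by simp
qed

lemma net_is_radial_nn_fun: "is_radial_nn_fun (n # replicate N (Suc d) @ [m]) net"
  unfolding is_radial_nn_fun_def net_def
  by (intro exI[of _ "map hidden_layer [0..<N] @ [output_layer]"])
    (auto simp: output_layer_def piecewise_diff_hcut piecewise_diff_id elim: hidden_layer.elims)

end

lemma ex_radial_nn_ball_values: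
  assumes "\<And>i. i < N \<Longrightarrow> inRn n (c i)" and "\<And>i. i < N \<Longrightarrow> 0 < r i"
    and "\<And>i. i < N \<Longrightarrow> inRn m (y i)"
  shows "\<exists>F. is_radial_nn_fun (n # replicate N (max n m + 1) @ [m]) F \<and>
    (\<forall>x. inRn n x \<longrightarrow> (\<exists>k<N. x \<in> eball n (c k) (r k)) \<longrightarrow>
      (\<exists>k<N. x \<in> eball n (c k) (r k) \<and> F x = y k))"
proof -
  let ?dists = "(\<lambda>(k, j). edist m (y k) (y j)) ` ({..<N} \<times> {..<N})"
  obtain M where "0 < M" and M: "\<forall>s\<in>?dists. 0 < s \<longrightarrow> (\<Sum>i<N. sqrt (1 + (r i)^2)) \<le> M * s"
    using ex_scale_ge[of ?dists] by blast
  have "sqrt (1 + (r i)^2) \<le> M * edist m (y k) (y j)"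
    if "i < N" "j < N" "k < N" "0 < edist m (y k) (y j)" for i j k
  proof -
    have "sqrt (1 + (r i)^2) \<le> (\<Sum>i<N. sqrt (1 + (r i)^2))"
      using that by (intro member_le_sum) auto
    also have "\<dots> \<le> M * edist m (y k) (y j)"
      using M that by auto
    finally show ?thesis .
  qed
  then interpret first_hit_net n m N c y r M
    using assms \<open>0 < M\<close> by unfold_locales auto
  have "\<exists>k<N. x \<in> eball n (c k) (r k) \<and> net x = y k"
    if x: "inRn n x" and hit: "\<exists>k<N. x \<in> eball n (c k) (r k)" for x
  proof -
    obtain k where "k < N" "x \<in> eball n (c k) (r k)" "\<forall>j<k. x \<notin> eball n (c j) (r j)"
      using hit exists_least_iff[of "\<lambda>k. k < N \<and> x \<in> eball n (c k) (r k)"] by auto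
    then show ?thesis
      using net_first_hit[OF x] by blast
  qed
  then show ?thesis
    using net_is_radial_nn_fun by auto
qed

theorem theorem5:
  fixes n m :: nat and K :: "(nat \<Rightarrow> real) set" and f :: "(nat \<Rightarrow> real) \<Rightarrow> (nat \<Rightarrow> real)"
    and \<epsilon> :: real
  assumes "K \<subseteq> {x. inRn n x}" and "compact K"
    and "continuous_on K f" and "\<forall>x\<in>K. inRn m (f x)"
    and "\<epsilon> > 0"
  shows "\<exists>F. is_radial_nn_fun (n # replicate (Ncov n m f K \<epsilon>) (max n m + 1) @ [m]) F
           \<and> (\<forall>x\<in>K. edist m (F x) (f x) < \<epsilon>)"
proof -
  let ?N = "Ncov n m f K \<epsilon>"
  obtain c r where cover: "ball_cover n m f K \<epsilon> ?N c r"
    using ball_cover_Ncov[OF assms] by blast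
  then have "\<And>i. i < ?N \<Longrightarrow> inRn n (c i) \<and> 0 < r i \<and> inRn m (f (c i))"
    using assms(1,4) unfolding ball_cover_def by blast
  then obtain F where F: "is_radial_nn_fun (n # replicate ?N (max n m + 1) @ [m]) F"
    and ball_value: "\<And>x. inRn n x \<Longrightarrow> \<exists>k<?N. x \<in> eball n (c k) (r k) \<Longrightarrow>
      \<exists>k<?N. x \<in> eball n (c k) (r k) \<and> F x = f (c k)"
    using ex_radial_nn_ball_values[of ?N n c r m "\<lambda>i. f (c i)"] by blast
  have "edist m (F x) (f x) < \<epsilon>" if "x \<in> K" for x
  proof -
    have "inRn n x" and "\<exists>k<?N. x \<in> eball n (c k) (r k)"
      using cover that assms(1) unfolding ball_cover_def by blast+
    then obtain k where k: "k < ?N" "x \<in> eball n (c k) (r k)" and "F x = f (c k)"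
      using ball_value by blast
    moreover have "f x \<in> eball m (f (c k)) \<epsilon>"
      using cover k that unfolding ball_cover_def by blast
    ultimately show ?thesis
      by (simp add: eball_def edist_commute)
  qed
  then show ?thesis
    using F by blast
qed

end
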